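(* Fix integers $\ell<\mu<u$ and a scale $s>0$. Let $Z$ be the random variable on $\{\ell,\ell+1,\dots,u\}$ with $$\Pr[Z=k]=\begin{cases}F(\ell\mid\mu,s)&k=\ell,\\ p(k\mid\mu,s)&\ell<k<u,\\ 1-F(u-1\mid\mu,s)&k=u,\\ 0&\text{otherwise},\end{cases}$$ where $p(k\mid\mu,s)=\frac{e^{1/s}-1}{e^{1/s}+1}e^{-|k-\mu|/s}$ and $F(x\mid\mu,s)=\frac{e^{1/s}}{e^{1/s}+1}e^{-(\mu-x)/s}$ if $x\le\mu$, and $F(x\mid\mu,s)=1-\frac{1}{e^{1/s}+1}e^{-(x-\mu)/s}$ if $x>\mu$. If the support $\{\ell,\dots,u\}$ contains at least four points, then there exists $k\in\{\ell,\dots,u\}$ such that $\Pr[Z=k]\notin\{t/2^N: t,N\in\mathbb{N}\}$, i.e. at least one output mass is not a dyadic rational.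
   Context: $Z$ is the Discrete Laplace distribution with shift $\mu$ and scale $s$ censored (clamped) to $[\ell,u]$. *)

theory Defs
  imports Complex_Main
begin

definition dlap_pmf :: "real \<Rightarrow> real \<Rightarrow> int \<Rightarrow> real" where
  "dlap_pmf \<mu> s k = (exp (1/s) - 1) / (exp (1/s) + 1) * exp (- \<bar>real_of_int k - \<mu>\<bar> / s)"

definition dlap_cdf :: "real \<Rightarrow> real \<Rightarrow> real \<Rightarrow> real" where
  "dlap_cdf \<mu> s x = (if x \<le> \<mu> then exp (1/s) / (exp (1/s) + 1) * exp (- (\<mu> - x) / s)
                       else 1 - 1 / (exp (1/s) + 1) * exp (- (x - \<mu>) / s))"

definition clamped_dlap_mass :: "int \<Rightarrow> int \<Rightarrow> real \<Rightarrow> real \<Rightarrow> int \<Rightarrow> real" where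
  "clamped_dlap_mass l u \<mu> s k =
     (if k = l then dlap_cdf \<mu> s (real_of_int l)
      else if l < k \<and> k < u then dlap_pmf \<mu> s k
      else if k = u then 1 - dlap_cdf \<mu> s (real_of_int (u - 1))
      else 0)"

definition dyadic :: "real set" where
  "dyadic = {real t / 2 ^ N | t N :: nat. True}"

end

theory Submission
  imports Defs "HOL-Computational_Algebra.Primes"
begin

text \<open>
  Put \<open>q = exp (-1/s)\<close>. The masses at \<open>\<mu>\<close> and at an interior neighbour of \<open>\<mu>\<close> are
  \<open>c = (1 - q) / (1 + q)\<close> and \<open>c q\<close>, so both \<open>x = 1 + q = 2 - c - c q\<close> and
  \<open>1 / x = (1 + c) / 2\<close> would be dyadic if both masses were. A dyadic rational whose
  inverse is dyadic is a power of two, but \<open>1 < x < 2\<close>.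
\<close>

lemma dyadic_common_denominator:
  assumes "x \<in> dyadic" and "y \<in> dyadic"
  obtains a b N where "x = real a / 2 ^ N" and "y = real b / 2 ^ N"
proof -
  obtain a M b N where x: "x = real a / 2 ^ M" and y: "y = real b / 2 ^ N"
    using assms unfolding dyadic_def by blast
  have "x = real (a * 2 ^ N) / 2 ^ (M + N)" "y = real (b * 2 ^ M) / 2 ^ (M + N)"
    unfolding x y by (simp_all add: power_add)
  then show thesis by (rule that)
qed

lemma of_nat_in_dyadic [simp]: "real n \<in> dyadic"
  unfolding dyadic_def by (intro CollectI exI[of _ n] exI[of _ 0]) simp

lemma one_in_dyadic [simp]: "1 \<in> dyadic"
  using of_nat_in_dyadic[of 1] by simp

lemma two_in_dyadic [simp]: "2 \<in> dyadic"
  using of_nat_in_dyadic[of 2] by simp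

lemma dyadic_add:
  assumes "x \<in> dyadic" and "y \<in> dyadic"
  shows "x + y \<in> dyadic"
proof -
  obtain a b N where "x = real a / 2 ^ N" "y = real b / 2 ^ N"
    using assms by (rule dyadic_common_denominator)
  then have "x + y = real (a + b) / 2 ^ N" by (simp add: add_divide_distrib)
  then show ?thesis unfolding dyadic_def by blast
qed

lemma dyadic_diff:
  assumes "x \<in> dyadic" and "y \<in> dyadic" and "y \<le> x"
  shows "x - y \<in> dyadic"
proof -
  obtain a b N where x: "x = real a / 2 ^ N" and y: "y = real b / 2 ^ N"
    using assms(1,2) by (rule dyadic_common_denominator)
  have "b \<le> a" using \<open>y \<le> x\<close> unfolding x y by (simp add: divide_le_cancel)
  then have "x - y = real (a - b) / 2 ^ N" unfolding x y by (simp add: of_nat_diff diff_divide_distrib)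
  then show ?thesis unfolding dyadic_def by blast
qed

lemma dyadic_half:
  assumes "x \<in> dyadic"
  shows "x / 2 \<in> dyadic"
proof -
  obtain a N where "x = real a / 2 ^ N" using assms unfolding dyadic_def by blast
  then have "x / 2 = real a / 2 ^ Suc N" by simp
  then show ?thesis unfolding dyadic_def by blast
qed

lemma dyadic_unit_eq_power_of_two:
  assumes "x \<in> dyadic" and "1 / x \<in> dyadic" and "x \<noteq> 0"
  obtains i N :: nat where "x = 2 ^ i / 2 ^ N"
proof -
  obtain a b N where x: "x = real a / 2 ^ N" and x': "1 / x = real b / 2 ^ N"
    using assms(1,2) by (rule dyadic_common_denominator)
  have "real (a * b) = real (2 ^ (N + N))"
    using x x' \<open>x \<noteq> 0\<close> by (simp add: field_simps power_add)
  then have "a dvd 2 ^ (N + N)" by (metis dvd_triv_left of_nat_eq_iff)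
  then obtain i where "a = 2 ^ i" by (auto simp: divides_primepow_nat)
  with x show thesis by (intro that[of i N]) simp
qed

lemma power_of_two_ratio_not_in_1_2:
  assumes "1 < (2::real) ^ i / 2 ^ N"
  shows "\<not> (2::real) ^ i / 2 ^ N < 2"
proof
  assume "(2::real) ^ i / 2 ^ N < 2"
  then have "(2::real) ^ i < 2 ^ Suc N" by (simp add: divide_less_eq)
  moreover have "(2::real) ^ N < 2 ^ i" using assms by (simp add: less_divide_eq)
  ultimately have "i < Suc N" and "N < i"
    by (simp_all only: power_strict_increasing_iff[of "2::real"])
  then show False by simp
qed

lemma dlap_pmf_centre_and_neighbour:
  fixes \<mu> k :: int and s :: real
  assumes "\<bar>k - \<mu>\<bar> = 1"
  defines "q \<equiv> exp (- 1 / s)"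
  shows "dlap_pmf \<mu> s \<mu> = (1 - q) / (1 + q)"
    and "dlap_pmf \<mu> s k = (1 - q) / (1 + q) * q"
proof -
  have q: "exp (1 / s) = 1 / q" "q > 0"
    unfolding q_def by (simp_all add: exp_minus field_simps)
  have ratio: "(exp (1 / s) - 1) / (exp (1 / s) + 1) = (1 - q) / (1 + q)"
  proof -
    have "1 / q - 1 = (1 - q) / q" and "1 / q + 1 = (1 + q) / q"
      using q(2) by (simp_all add: field_simps)
    then show ?thesis unfolding q(1) using q(2) by simp
  qed
  show "dlap_pmf \<mu> s \<mu> = (1 - q) / (1 + q)"
    unfolding dlap_pmf_def ratio by simp
  have "\<bar>real_of_int k - real_of_int \<mu>\<bar> = 1"
    using assms by (metis of_int_1 of_int_abs of_int_diff)
  then show "dlap_pmf \<mu> s k = (1 - q) / (1 + q) * q"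
    unfolding dlap_pmf_def ratio q_def by simp
qed

lemma dlap_pmf_centre_or_neighbour_not_dyadic:
  fixes \<mu> k :: int
  assumes "s > 0" and "\<bar>k - \<mu>\<bar> = 1"
  shows "dlap_pmf \<mu> s \<mu> \<notin> dyadic \<or> dlap_pmf \<mu> s k \<notin> dyadic"
proof (rule ccontr)
  define q where "q = exp (- 1 / s)"
  define c where "c = (1 - q) / (1 + q)"
  assume "\<not> ?thesis"
  then have c: "c \<in> dyadic" and cq: "c * q \<in> dyadic"
    using dlap_pmf_centre_and_neighbour[OF assms(2)] unfolding c_def q_def by auto
  have q: "0 < q" "q < 1" unfolding q_def using \<open>s > 0\<close> by auto
  have "1 + q = 2 - (c + c * q)" and "c + c * q \<le> 2"
    using q unfolding c_def by (simp_all add: field_simps)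
  then have "1 + q \<in> dyadic" using c cq by (metis dyadic_add dyadic_diff two_in_dyadic)
  moreover have "1 / (1 + q) = (1 + c) / 2"
    using q unfolding c_def by (simp add: field_simps)
  then have "1 / (1 + q) \<in> dyadic" using c by (metis dyadic_add dyadic_half one_in_dyadic)
  moreover have "1 + q \<noteq> 0" using q by simp
  ultimately obtain i N where power: "1 + q = 2 ^ i / 2 ^ N"
    by (rule dyadic_unit_eq_power_of_two)
  show False using power_of_two_ratio_not_in_1_2[of i N] q unfolding power[symmetric] by simp
qed

theorem mainTheorem12:
  fixes l u \<mu> :: int and s :: real
  assumes "l < \<mu>" and "\<mu> < u" and "s > 0"
    and "card {l..u} \<ge> 4"
  shows "\<exists>k\<in>{l..u}. clamped_dlap_mass l u (real_of_int \<mu>) s k \<notin> dyadic"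
proof -
  obtain k where k: "l < k" "k < u" "\<bar>k - \<mu>\<bar> = 1"
  proof (cases "\<mu> + 1 < u")
    case True then show ?thesis using that[of "\<mu> + 1"] assms by auto
  next
    case False then show ?thesis using that[of "\<mu> - 1"] assms by auto
  qed
  have "clamped_dlap_mass l u \<mu> s \<mu> = dlap_pmf \<mu> s \<mu>"
    and "clamped_dlap_mass l u \<mu> s k = dlap_pmf \<mu> s k"
    using assms k unfolding clamped_dlap_mass_def by auto
  moreover have "\<mu> \<in> {l..u}" and "k \<in> {l..u}" using assms k by auto
  ultimately show ?thesis
    using dlap_pmf_centre_or_neighbour_not_dyadic[OF \<open>s > 0\<close> k(3)] by metis
qed

end
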